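(* Fix $\bar y\in\mathbb{R}$ and assume Assumption A and Assumption C at $\bar y$. Then for any $0<T<\infty$, $$\lim_{n\to\infty}\sup_{0\le t\le T}n^{-1/4}\big|EY_{n,1}(t)-EY_{n,2}(t)\big|=0,$$ i.e. $\sup_{0\le t\le T}n^{-1/4}|EY_n(t)|\to0$ where $Y_n=Y_{n,1}-Y_{n,2}$.
   Context: Setting (independent random walk height model). Let $p=\{p(x):x\in\mathbb{Z}\}$ be a probability kernel on $\mathbb{Z}$. Assumption A: for some $\delta>0$, $\sum_{x}e^{\theta x}p(x)<\infty$ for $|\theta|\le\delta$. Set $b=\sum_x xp(x)$. A "random walk" is a continuous-time random walk on $\mathbb{Z}$ that jumps at rate 1 with increments distributed according to $p$. For each $n\in\mathbb{N}$ nonnegative integer initial occupation variables $\eta^n_0(x)$, $x\in\mathbb{Z}$, are given; place $\eta^n_0(x)$ particles at each site $x$ at time $0$ and let them evolve as independent random walks, independent of the initial occupation variables; write $X^n_i(\cdot)$ for the particle paths. $[\cdot]$ denotes the integer part. Define $Y_{n,1}(t)=\#\{i:X^n_i(0)\ge[n\bar y]+1,\ X^n_i(nt)\le[n\bar y]+[nbt]\}$ and $Y_{n,2}(t)=\#\{i:X^n_i(0)\le[n\bar y],\ X^n_i(nt)>[n\bar y]+[nbt]\}$. Assumption C at a point $\bar y\in\mathbb{R}$: for each $n$ the variables $\{\eta^n_0(x):x\in\mathbb{Z}\}$ are independent and $\sup_{n\in\mathbb{N},x\in\mathbb{Z}}E[\eta^n_0(x)^6]<\infty$; write $\rho^n_0(x)=E\eta^n_0(x)$,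 $v^n_0(x)=\mathrm{Var}[\eta^n_0(x)]$. Bounded nonnegative functions $\rho_0,v_0$ on $\mathbb{R}$ are given, and there are positive integers $L=L(n)$ with $n^{-1/4}L(n)\to0$ such that for every finite $A$, $\lim_{n\to\infty}\sup_{|m|\le A\sqrt{n\log n}} n^{1/4}\big|L^{-1}\sum_{j=1}^{L}\rho^n_0([n\bar y]+m+j)-\rho_0(\bar y)\big|=0$, and the same holds with $\rho^n_0,\rho_0$ replaced by $v^n_0,v_0$. *)

theory Defs
  imports "HOL-Probability.Probability"
begin

definition step_sum_pmf :: "int pmf \<Rightarrow> nat \<Rightarrow> int pmf" where
  "step_sum_pmf p j =
     ((\<lambda>q. bind_pmf q (\<lambda>s. map_pmf (\<lambda>z. s + z) p)) ^^ j) (return_pmf 0)"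

text \<open>Law of the displacement at time t of a continuous-time random walk jumping
  at rate 1 with increments distributed according to p (compound Poisson law).\<close>
definition crw_pmf :: "int pmf \<Rightarrow> real \<Rightarrow> int pmf" where
  "crw_pmf p t = (if t \<le> 0 then return_pmf 0
                  else bind_pmf (poisson_pmf t) (step_sum_pmf p))"

definition is_crw :: "'a measure \<Rightarrow> int pmf \<Rightarrow> int \<Rightarrow> ('a \<Rightarrow> real \<Rightarrow> int) \<Rightarrow> bool" where
  "is_crw M p x X \<longleftrightarrow>
     (\<forall>\<omega>\<in>space M. X \<omega> 0 = x) \<and>
     (\<forall>ts::real list. sorted ts \<and> (\<forall>t\<in>set ts. 0 \<le> t) \<longrightarrow>
        prob_space.indep_vars M (\<lambda>_. count_space UNIV)
          (\<lambda>i \<omega>. X \<omega> (ts ! Suc i) - X \<omega> (ts ! i)) {..<length ts - 1} \<and>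
        (\<forall>i < length ts - 1.
           distr M (count_space UNIV) (\<lambda>\<omega>. X \<omega> (ts ! Suc i) - X \<omega> (ts ! i))
             = measure_pmf (crw_pmf p (ts ! Suc i - ts ! i))))"

text \<open>Joint independence of the occupation variables eta x (x \<in> Z) and the
  particle paths X x i (x \<in> Z, i \<in> N), where X x i is the path of the i-th particle
  initially at x (only used when i < eta x); paths are random elements of the
  product space of functions real \<Rightarrow> int.\<close>
definition system_indep ::
  "'a measure \<Rightarrow> (int \<Rightarrow> 'a \<Rightarrow> nat) \<Rightarrow> (int \<Rightarrow> nat \<Rightarrow> 'a \<Rightarrow> real \<Rightarrow> int) \<Rightarrow> bool" where
  "system_indep M eta X \<longleftrightarrow>
     (\<forall>x. eta x \<in> measurable M (count_space UNIV)) \<and>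
     (\<forall>x i. X x i \<in> measurable M (PiM UNIV (\<lambda>_::real. count_space (UNIV::int set)))) \<and>
     prob_space.indep_sets M
       (\<lambda>k. case k of
              Inl x \<Rightarrow> {eta x -` A \<inter> space M | A. A \<in> sets (count_space (UNIV::nat set))}
            | Inr (x, i) \<Rightarrow> {X x i -` A \<inter> space M | A.
                 A \<in> sets (PiM UNIV (\<lambda>_::real. count_space (UNIV::int set)))})
       UNIV"

definition particle_count ::
  "(int \<Rightarrow> 'a \<Rightarrow> nat) \<Rightarrow> (int \<Rightarrow> nat \<Rightarrow> 'a \<Rightarrow> real \<Rightarrow> int) \<Rightarrow> (int \<Rightarrow> int \<Rightarrow> bool)
     \<Rightarrow> real \<Rightarrow> 'a \<Rightarrow> ennreal" where
  "particle_count eta X P s \<omega> =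
     emeasure (count_space UNIV) {(x, i). i < eta x \<omega> \<and> P (X x i \<omega> 0) (X x i \<omega> s)}"

definition Y1 :: "(int \<Rightarrow> 'a \<Rightarrow> nat) \<Rightarrow> (int \<Rightarrow> nat \<Rightarrow> 'a \<Rightarrow> real \<Rightarrow> int) \<Rightarrow> real \<Rightarrow> real
     \<Rightarrow> nat \<Rightarrow> real \<Rightarrow> 'a \<Rightarrow> ennreal" where
  "Y1 eta X b ybar n t = particle_count eta X
     (\<lambda>a c. a \<ge> \<lfloor>real n * ybar\<rfloor> + 1 \<and> c \<le> \<lfloor>real n * ybar\<rfloor> + \<lfloor>real n * b * t\<rfloor>)
     (real n * t)"

definition Y2 :: "(int \<Rightarrow> 'a \<Rightarrow> nat) \<Rightarrow> (int \<Rightarrow> nat \<Rightarrow> 'a \<Rightarrow> real \<Rightarrow> int) \<Rightarrow> real \<Rightarrow> real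
     \<Rightarrow> nat \<Rightarrow> real \<Rightarrow> 'a \<Rightarrow> ennreal" where
  "Y2 eta X b ybar n t = particle_count eta X
     (\<lambda>a c. a \<le> \<lfloor>real n * ybar\<rfloor> \<and> c > \<lfloor>real n * ybar\<rfloor> + \<lfloor>real n * b * t\<rfloor>)
     (real n * t)"

end

theory Submission
  imports Defs
begin

(*
  Since occupations and paths are independent, E Y_{n,1}(t) - E Y_{n,2}(t) is the expectation of
  the signed mass of rho_n between [n ybar] and [n ybar] + Y, where Y = [nbt] - D and D is the
  displacement of a single walk up to time nt. Split this mass at y into rho0(ybar) y and a deviation.
  Exponential moments of p make Y sub-Gaussian at scale n around a point within distance 1 of 0, so
  |E Y| = O(1), E |Y| = O(sqrt n), and the part of Y beyond A sqrt(n log n) has expectation O(1).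
  Cutting [0, y] into blocks of length L, Assumption C bounds the deviation by o(n^(-1/4)) |y| + O(L)
  whenever |y| <= A sqrt(n log n). Hence |E Y_n(t)| = O(1) + o(n^(-1/4)) sqrt n + O(L) uniformly in
  t <= T, which is o(n^(1/4)) because n^(-1/4) L -> 0.
*)

section \<open>Exponential inequalities and the compound Poisson law\<close>

lemma exp_le_one_plus_sq:
  fixes y :: real
  shows "exp y \<le> 1 + y + y\<^sup>2 * exp \<bar>y\<bar>"
proof -
  obtain t where "\<bar>t\<bar> \<le> \<bar>y\<bar>" and exp_y: "exp y = 1 + y + exp t / 2 * y\<^sup>2"
    using Maclaurin_exp_le[of y 2] by (auto simp: eval_nat_numeral)
  then have "exp t \<le> exp \<bar>y\<bar>" by simp
  then have "exp t / 2 \<le> exp \<bar>y\<bar>"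
    using exp_gt_zero[of t] by linarith
  then have "exp t / 2 * y\<^sup>2 \<le> exp \<bar>y\<bar> * y\<^sup>2"
    by (rule mult_right_mono) simp
  then show ?thesis using exp_y by (simp add: mult.commute)
qed

lemma exp_abs_le_exp_sum: "exp \<bar>x\<bar> \<le> exp x + exp (- x)" for x :: real
  by (cases "0 \<le> x") (simp_all add: add_increasing add_increasing2)

lemma abs_le_exp_sum:
  fixes x \<delta> :: real
  assumes "0 < \<delta>"
  shows "\<bar>x\<bar> \<le> (exp (\<delta> * x) + exp (- \<delta> * x)) / \<delta>"
proof -
  have "\<delta> * \<bar>x\<bar> \<le> exp (\<delta> * \<bar>x\<bar>)"
    using exp_ge_add_one_self[of "\<delta> * \<bar>x\<bar>"] by linarith
  also have "\<dots> = exp \<bar>\<delta> * x\<bar>"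
    using assms by (simp add: abs_mult)
  also have "\<dots> \<le> exp (\<delta> * x) + exp (- \<delta> * x)"
    using exp_abs_le_exp_sum[of "\<delta> * x"] by simp
  finally show ?thesis using assms by (simp add: field_simps)
qed

lemma sq_mult_exp_le_exp_sum:
  fixes x \<delta> :: real
  assumes "0 < \<delta>"
  shows "x\<^sup>2 * exp (\<delta> / 2 * \<bar>x\<bar>) \<le> 8 / \<delta>\<^sup>2 * (exp (\<delta> * x) + exp (- \<delta> * x))"
proof -
  let ?z = "\<delta> / 2 * \<bar>x\<bar>"
  have "0 \<le> ?z" using assms by simp
  then have "?z\<^sup>2 / 2 \<le> exp ?z"
    using exp_lower_Taylor_quadratic[of ?z] by linarith
  then have "x\<^sup>2 \<le> 8 / \<delta>\<^sup>2 * exp ?z"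
    using assms by (simp add: field_simps power2_eq_square)
  then have "x\<^sup>2 * exp ?z \<le> 8 / \<delta>\<^sup>2 * exp ?z * exp ?z"
    by (rule mult_right_mono) simp
  also have "\<dots> = 8 / \<delta>\<^sup>2 * exp \<bar>\<delta> * x\<bar>"
    using assms by (simp add: abs_mult mult.assoc flip: exp_add)
  also have "\<dots> \<le> 8 / \<delta>\<^sup>2 * (exp (\<delta> * x) + exp (- \<delta> * x))"
    using exp_abs_le_exp_sum[of "\<delta> * x"] by (intro mult_left_mono) auto
  finally show ?thesis .
qed

lemma nn_integral_exp_step_sum_pmf:
  "(\<integral>\<^sup>+d. exp (\<theta> * real_of_int d) \<partial>step_sum_pmf p j) = (\<integral>\<^sup>+x. exp (\<theta> * real_of_int x) \<partial>p) ^ j"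
proof (induction j)
  case 0
  then show ?case by (simp add: step_sum_pmf_def)
next
  case (Suc j)
  let ?m = "\<lambda>q. \<integral>\<^sup>+x. exp (\<theta> * real_of_int x) \<partial>q"
  have "?m (step_sum_pmf p (Suc j))
      = (\<integral>\<^sup>+s. ennreal (exp (\<theta> * real_of_int s)) * ?m p \<partial>step_sum_pmf p j)"
    by (simp add: step_sum_pmf_def distrib_left exp_add ennreal_mult nn_integral_cmult)
  also have "\<dots> = ?m (step_sum_pmf p j) * ?m p"
    by (simp add: nn_integral_multc)
  finally show ?case using Suc by (simp add: mult.commute)
qed

lemma nn_integral_exp_crw_pmf:
  fixes p :: "int pmf"
  assumes "0 < s" and mgf: "(\<integral>\<^sup>+x. exp (\<theta> * real_of_int x) \<partial>p) = ennreal \<phi>" and "0 \<le> \<phi>"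
  shows "(\<integral>\<^sup>+d. exp (\<theta> * real_of_int d) \<partial>crw_pmf p s) = exp (s * (\<phi> - 1))"
proof -
  have sums: "(\<lambda>j. exp (- s) * ((s * \<phi>) ^ j / fact j)) sums (exp (- s) * exp (s * \<phi>))"
    using exp_converges[of "s * \<phi>"] by (intro sums_mult) (simp add: divide_inverse_commute)
  have "(\<integral>\<^sup>+d. exp (\<theta> * real_of_int d) \<partial>crw_pmf p s) = (\<integral>\<^sup>+j. ennreal \<phi> ^ j \<partial>poisson_pmf s)"
    using assms by (simp add: crw_pmf_def nn_integral_exp_step_sum_pmf mgf)
  also have "\<dots> = (\<Sum>j. ennreal (exp (- s) * ((s * \<phi>) ^ j / fact j)))"
    using assms by (simp add: nn_integral_measure_pmf nn_integral_count_space_nat ennreal_power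
        power_mult_distrib mult_ac flip: ennreal_mult)
  also have "\<dots> = ennreal (\<Sum>j. exp (- s) * ((s * \<phi>) ^ j / fact j))"
    by (rule suminf_ennreal2) (use sums_summable[OF sums] assms in auto)
  also have "(\<Sum>j. exp (- s) * ((s * \<phi>) ^ j / fact j)) = exp (- s) * exp (s * \<phi>)"
    by (rule sums_unique[OF sums, symmetric])
  also have "exp (- s) * exp (s * \<phi>) = exp (s * (\<phi> - 1))"
    by (simp add: algebra_simps flip: exp_add)
  finally show ?thesis .
qed

section \<open>Moment bounds from moment generating functions\<close>

lemma integrable_expectation_le_of_nn_integral_le:
  fixes \<mu> :: "'b pmf" and f :: "'b \<Rightarrow> real"
  assumes "\<And>x. 0 \<le> f x" and "(\<integral>\<^sup>+x. f x \<partial>\<mu>) \<le> ennreal C" and "0 \<le> C"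
  shows "integrable \<mu> f" and "measure_pmf.expectation \<mu> f \<le> C"
proof -
  show "integrable \<mu> f"
    using assms(1,2) by (intro integrableI_bounded) (auto simp: order.strict_trans1)
  have "measure_pmf.expectation \<mu> f = enn2real (\<integral>\<^sup>+x. f x \<partial>\<mu>)"
    by (rule integral_eq_nn_integral) (use assms in auto)
  also have "\<dots> \<le> C"
    using enn2real_mono[OF assms(2)] assms(3) by simp
  finally show "measure_pmf.expectation \<mu> f \<le> C" .
qed

context
  fixes \<mu> :: "'b pmf" and f :: "'b \<Rightarrow> real" and \<theta> B :: real
  assumes mgf: "\<And>\<sigma>. \<bar>\<sigma>\<bar> = \<theta> \<Longrightarrow> (\<integral>\<^sup>+x. exp (\<sigma> * f x) \<partial>\<mu>) \<le> ennreal B"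
begin

lemma nn_integral_exp_abs_le:
  assumes "0 \<le> \<theta>"
  shows "(\<integral>\<^sup>+x. exp (\<theta> * \<bar>f x\<bar>) \<partial>\<mu>) \<le> ennreal (2 * B)"
proof -
  have "(\<integral>\<^sup>+x. exp (\<theta> * \<bar>f x\<bar>) \<partial>\<mu>) \<le> (\<integral>\<^sup>+x. ennreal (exp (\<theta> * f x)) + exp (- \<theta> * f x) \<partial>\<mu>)"
  proof (intro nn_integral_mono)
    fix x
    have "exp (\<theta> * \<bar>f x\<bar>) = exp \<bar>\<theta> * f x\<bar>" using assms by (simp add: abs_mult)
    then show "ennreal (exp (\<theta> * \<bar>f x\<bar>)) \<le> ennreal (exp (\<theta> * f x)) + exp (- \<theta> * f x)"
      using exp_abs_le_exp_sum[of "\<theta> * f x"] by (simp flip: ennreal_plus)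
  qed
  also have "\<dots> = (\<integral>\<^sup>+x. exp (\<theta> * f x) \<partial>\<mu>) + (\<integral>\<^sup>+x. exp (- \<theta> * f x) \<partial>\<mu>)"
    by (rule nn_integral_add) auto
  also have "\<dots> \<le> ennreal B + ennreal B"
    using assms by (intro add_mono mgf) auto
  also have "\<dots> = ennreal (2 * B)"
    by (cases "0 \<le> B") (simp_all flip: ennreal_plus add: ennreal_neg)
  finally show ?thesis .
qed

lemma mgf_bound_pos:
  assumes "0 \<le> \<theta>"
  shows "0 < B"
proof -
  have "(1::ennreal) = (\<integral>\<^sup>+x. 1 \<partial>\<mu>)" by simp
  also have "\<dots> \<le> (\<integral>\<^sup>+x. exp (\<theta> * \<bar>f x\<bar>) \<partial>\<mu>)"
    using assms by (intro nn_integral_mono) simp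
  also have "\<dots> \<le> ennreal (2 * B)" by (rule nn_integral_exp_abs_le[OF assms])
  finally show ?thesis by (simp add: ennreal_ge_1)
qed

lemma abs_moment_le_of_mgf:
  assumes "0 < \<theta>"
  shows "integrable \<mu> f" and "measure_pmf.expectation \<mu> (\<lambda>x. \<bar>f x\<bar>) \<le> 2 * B / \<theta>"
proof -
  have "(\<integral>\<^sup>+x. \<bar>f x\<bar> \<partial>\<mu>) \<le> (\<integral>\<^sup>+x. ennreal (1 / \<theta>) * exp (\<theta> * \<bar>f x\<bar>) \<partial>\<mu>)"
  proof (intro nn_integral_mono)
    fix x
    have "\<theta> * \<bar>f x\<bar> \<le> exp (\<theta> * \<bar>f x\<bar>)"
      using exp_ge_add_one_self[of "\<theta> * \<bar>f x\<bar>"] by linarith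
    then show "ennreal \<bar>f x\<bar> \<le> ennreal (1 / \<theta>) * exp (\<theta> * \<bar>f x\<bar>)"
      using assms by (simp add: field_simps flip: ennreal_mult)
  qed
  also have "\<dots> = ennreal (1 / \<theta>) * (\<integral>\<^sup>+x. exp (\<theta> * \<bar>f x\<bar>) \<partial>\<mu>)"
    by (simp add: nn_integral_cmult)
  also have "\<dots> \<le> ennreal (1 / \<theta>) * ennreal (2 * B)"
    using assms by (intro mult_left_mono nn_integral_exp_abs_le) auto
  also have "\<dots> = ennreal (2 * B / \<theta>)"
    using assms mgf_bound_pos by (simp flip: ennreal_mult)
  finally have bound: "(\<integral>\<^sup>+x. \<bar>f x\<bar> \<partial>\<mu>) \<le> ennreal (2 * B / \<theta>)" .
  have "0 \<le> 2 * B / \<theta>" using mgf_bound_pos assms by simp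
  note abs_bounds = integrable_expectation_le_of_nn_integral_le[OF _ bound this]
  then show "integrable \<mu> f" by (simp add: integrable_abs_iff)
  show "measure_pmf.expectation \<mu> (\<lambda>x. \<bar>f x\<bar>) \<le> 2 * B / \<theta>" by (rule abs_bounds(2)) simp
qed

lemma abs_mean_le_of_mgf:
  assumes "0 < \<theta>"
  shows "\<bar>measure_pmf.expectation \<mu> f\<bar> \<le> (B - 1) / \<theta>"
proof -
  have "\<sigma> * measure_pmf.expectation \<mu> f \<le> B - 1" if "\<bar>\<sigma>\<bar> = \<theta>" for \<sigma>
  proof -
    have "0 \<le> B" using mgf_bound_pos assms by simp
    note exp_bounds = integrable_expectation_le_of_nn_integral_le[OF _ mgf[OF that] this]
    have "1 + \<sigma> * measure_pmf.expectation \<mu> f = measure_pmf.expectation \<mu> (\<lambda>x. 1 + \<sigma> * f x)"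
      using abs_moment_le_of_mgf(1)[OF assms] by simp
    also have "\<dots> \<le> measure_pmf.expectation \<mu> (\<lambda>x. exp (\<sigma> * f x))"
      using abs_moment_le_of_mgf(1)[OF assms] exp_bounds(1) exp_ge_add_one_self
      by (intro integral_mono) auto
    also have "\<dots> \<le> B" by (rule exp_bounds(2)) simp
    finally show ?thesis by simp
  qed
  from this[of \<theta>] this[of "- \<theta>"] have "\<theta> * \<bar>measure_pmf.expectation \<mu> f\<bar> \<le> B - 1"
    using assms by (cases "0 \<le> measure_pmf.expectation \<mu> f") auto
  then show ?thesis using assms by (simp add: field_simps)
qed

end

lemma tail_moment_le_of_mgf:
  fixes \<mu> :: "'b pmf" and f :: "'b \<Rightarrow> real"
  assumes "0 < \<theta>" and mgf: "\<And>\<sigma>. \<bar>\<sigma>\<bar> = 2 * \<theta> \<Longrightarrow> (\<integral>\<^sup>+x. exp (\<sigma> * f x) \<partial>\<mu>) \<le> ennreal B"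
  shows "integrable \<mu> (\<lambda>x. \<bar>f x\<bar> * indicator {x. R < \<bar>f x\<bar>} x)"
    and "measure_pmf.expectation \<mu> (\<lambda>x. \<bar>f x\<bar> * indicator {x. R < \<bar>f x\<bar>} x) \<le> 2 * B * exp (- \<theta> * R) / \<theta>"
proof -
  have pointwise: "\<bar>f x\<bar> * indicator {x. R < \<bar>f x\<bar>} x \<le> exp (- \<theta> * R) / \<theta> * exp (2 * \<theta> * \<bar>f x\<bar>)" for x
  proof (cases "R < \<bar>f x\<bar>")
    case True
    have "\<theta> * \<bar>f x\<bar> \<le> exp (\<theta> * \<bar>f x\<bar>)"
      using exp_ge_add_one_self[of "\<theta> * \<bar>f x\<bar>"] by linarith
    also have "\<dots> \<le> exp (\<theta> * \<bar>f x\<bar>) * exp (\<theta> * (\<bar>f x\<bar> - R))"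
      using True assms by simp
    also have "\<dots> = \<theta> * (exp (- \<theta> * R) / \<theta> * exp (2 * \<theta> * \<bar>f x\<bar>))"
      using assms by (simp add: algebra_simps flip: exp_add)
    finally have "\<bar>f x\<bar> \<le> exp (- \<theta> * R) / \<theta> * exp (2 * \<theta> * \<bar>f x\<bar>)"
      using assms by (simp only: mult_le_cancel_left_pos)
    then show ?thesis using True by simp
  qed (use assms in simp)
  have "0 < B" using mgf_bound_pos[OF mgf] assms by simp
  have "(\<integral>\<^sup>+x. \<bar>f x\<bar> * indicator {x. R < \<bar>f x\<bar>} x \<partial>\<mu>)
      \<le> (\<integral>\<^sup>+x. ennreal (exp (- \<theta> * R) / \<theta>) * exp (2 * \<theta> * \<bar>f x\<bar>) \<partial>\<mu>)"
    using pointwise assms by (intro nn_integral_mono) (simp flip: ennreal_mult)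
  also have "\<dots> = ennreal (exp (- \<theta> * R) / \<theta>) * (\<integral>\<^sup>+x. exp (2 * \<theta> * \<bar>f x\<bar>) \<partial>\<mu>)"
    by (simp add: nn_integral_cmult)
  also have "\<dots> \<le> ennreal (exp (- \<theta> * R) / \<theta>) * ennreal (2 * B)"
    using assms by (intro mult_left_mono nn_integral_exp_abs_le[OF mgf]) auto
  also have "\<dots> = ennreal (2 * B * exp (- \<theta> * R) / \<theta>)"
    using assms \<open>0 < B\<close> by (simp add: mult_ac flip: ennreal_mult)
  finally have bound: "(\<integral>\<^sup>+x. \<bar>f x\<bar> * indicator {x. R < \<bar>f x\<bar>} x \<partial>\<mu>) \<le> ennreal (2 * B * exp (- \<theta> * R) / \<theta>)" .
  from \<open>0 < B\<close> have "0 \<le> 2 * B * exp (- \<theta> * R) / \<theta>" using assms by simp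
  from integrable_expectation_le_of_nn_integral_le[OF _ bound this]
  show "integrable \<mu> (\<lambda>x. \<bar>f x\<bar> * indicator {x. R < \<bar>f x\<bar>} x)"
    and "measure_pmf.expectation \<mu> (\<lambda>x. \<bar>f x\<bar> * indicator {x. R < \<bar>f x\<bar>} x) \<le> 2 * B * exp (- \<theta> * R) / \<theta>"
    by simp_all
qed

(* The term |sigma| allows f to be centred at a point within distance 1 of its mean. *)
definition offset_subgaussian :: "'b pmf \<Rightarrow> ('b \<Rightarrow> real) \<Rightarrow> real \<Rightarrow> real \<Rightarrow> bool" where
  "offset_subgaussian \<mu> f \<theta>0 V \<longleftrightarrow>
    (\<forall>\<sigma>. \<bar>\<sigma>\<bar> \<le> \<theta>0 \<longrightarrow> (\<integral>\<^sup>+x. exp (\<sigma> * f x) \<partial>\<mu>) \<le> ennreal (exp (\<bar>\<sigma>\<bar> + V * \<sigma>\<^sup>2)))"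

context
  fixes \<mu> :: "'b pmf" and f :: "'b \<Rightarrow> real" and \<theta>0 W :: real and n :: nat
  assumes subgaussian: "offset_subgaussian \<mu> f \<theta>0 (real n * W)" and "0 \<le> W"
begin

lemma offset_subgaussian_mgf_le:
  assumes "0 \<le> \<theta>" "\<theta> \<le> \<theta>0"
  shows "\<And>\<sigma>. \<bar>\<sigma>\<bar> = \<theta> \<Longrightarrow> (\<integral>\<^sup>+x. exp (\<sigma> * f x) \<partial>\<mu>) \<le> ennreal (exp (\<theta> + real n * W * \<theta>\<^sup>2))"
  using subgaussian assms unfolding offset_subgaussian_def by (metis order_refl power2_abs)

lemma abs_mean_le_of_offset_subgaussian:
  assumes "1 \<le> n" and "1 / real n \<le> \<theta>0"
  shows "\<bar>measure_pmf.expectation \<mu> f\<bar> \<le> (1 + W) * exp (1 + W)"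
proof -
  have "\<bar>measure_pmf.expectation \<mu> f\<bar> \<le> (exp (1 / real n + real n * W * (1 / real n)\<^sup>2) - 1) / (1 / real n)"
    using assms by (intro abs_mean_le_of_mgf[OF offset_subgaussian_mgf_le]) auto
  also have "1 / real n + real n * W * (1 / real n)\<^sup>2 = (1 + W) / real n"
    using assms by (simp add: power2_eq_square field_simps)
  also have "(exp ((1 + W) / real n) - 1) / (1 / real n)
      \<le> (1 + W) / real n * exp ((1 + W) / real n) / (1 / real n)"
    using exp_ge_add_one_self[of "- ((1 + W) / real n)"] \<open>0 \<le> W\<close> assms
    by (intro divide_right_mono) (auto simp: exp_minus field_simps)
  also have "\<dots> \<le> (1 + W) * exp (1 + W)"
    using assms \<open>0 \<le> W\<close> by (simp add: divide_le_eq)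
  finally show ?thesis .
qed

lemma abs_moment_le_of_offset_subgaussian:
  assumes "1 \<le> n" and "1 / sqrt (real n) \<le> \<theta>0"
  shows "integrable \<mu> f" and "measure_pmf.expectation \<mu> (\<lambda>x. \<bar>f x\<bar>) \<le> 2 * exp (1 + W) * sqrt (real n)"
proof -
  have "0 < 1 / sqrt (real n)" using assms by simp
  note moments = abs_moment_le_of_mgf[OF offset_subgaussian_mgf_le this, OF _ assms(2)]
  then show "integrable \<mu> f" by simp
  have "2 * exp (1 / sqrt (real n) + real n * W * (1 / sqrt (real n))\<^sup>2) / (1 / sqrt (real n))
      = 2 * exp (1 / sqrt (real n) + W) * sqrt (real n)"
    using assms by (simp add: power_divide)
  also have "\<dots> \<le> 2 * exp (1 + W) * sqrt (real n)"
    using assms by simp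
  finally show "measure_pmf.expectation \<mu> (\<lambda>x. \<bar>f x\<bar>) \<le> 2 * exp (1 + W) * sqrt (real n)"
    using moments(2) by simp
qed

lemma tail_moment_le_of_offset_subgaussian:
  assumes "3 \<le> n" and "2 * sqrt (ln (real n) / real n) \<le> \<theta>0" and "sqrt (ln (real n) / real n) \<le> 1 / 2"
  defines "R \<equiv> (4 * W + 1) * sqrt (real n * ln (real n))"
  shows "integrable \<mu> (\<lambda>x. \<bar>f x\<bar> * indicator {x. R < \<bar>f x\<bar>} x)"
    and "measure_pmf.expectation \<mu> (\<lambda>x. \<bar>f x\<bar> * indicator {x. R < \<bar>f x\<bar>} x) \<le> 2 * exp 1"
proof -
  \<comment> \<open>for this \<theta>, the factor exp (- \<theta> R) = 1 / n powr (4 W + 1) absorbs the growth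
    exp (n W (2 \<theta>)^2) = n powr (4 W) of the moment generating function at 2 \<theta>\<close>
  define l where "l = ln (real n)"
  define \<theta> where "\<theta> = sqrt (l / n)"
  have "exp 1 \<le> real n"
    using exp_le \<open>3 \<le> n\<close> by linarith
  then have "1 \<le> l"
    unfolding l_def using \<open>3 \<le> n\<close> by (simp add: ln_ge_iff)
  then have "0 < \<theta>" "n * \<theta>\<^sup>2 = l" and \<theta>_R: "\<theta> * R = (4 * W + 1) * l"
    using \<open>3 \<le> n\<close> by (simp_all add: \<theta>_def R_def l_def power2_eq_square flip: real_sqrt_mult)
  have "n * \<theta> = sqrt ((real n)\<^sup>2) * sqrt (l / n)"
    by (simp add: \<theta>_def)
  also have "\<dots> = sqrt (n * l)"
    using \<open>3 \<le> n\<close> by (subst real_sqrt_mult[symmetric]) (simp add: power2_eq_square)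
  finally have "n * \<theta> = sqrt (n * l)" .
  moreover have "1 \<le> n * l"
    using mult_mono[of 1 "real n" 1 l] \<open>1 \<le> l\<close> \<open>3 \<le> n\<close> by simp
  ultimately have "1 \<le> n * \<theta>"
    by simp
  note tail = tail_moment_le_of_mgf[OF \<open>0 < \<theta>\<close> offset_subgaussian_mgf_le, of "2 * \<theta>" R]
  have "n * W * (2 * \<theta>)\<^sup>2 = 4 * W * (n * \<theta>\<^sup>2)"
    by (simp add: power_mult_distrib)
  then have "2 * exp (2 * \<theta> + n * W * (2 * \<theta>)\<^sup>2) * exp (- \<theta> * R) / \<theta> = 2 * exp (2 * \<theta>) * exp (- l) / \<theta>"
    using \<open>n * \<theta>\<^sup>2 = l\<close> \<theta>_R by (simp add: algebra_simps flip: exp_add)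
  also have "\<dots> = 2 * exp (2 * \<theta>) / (n * \<theta>)"
    using \<open>3 \<le> n\<close> by (simp add: l_def exp_minus field_simps)
  also have "\<dots> \<le> 2 * exp (2 * \<theta>) / 1"
    using \<open>1 \<le> n * \<theta>\<close> by (intro divide_left_mono) auto
  also have "\<dots> \<le> 2 * exp 1"
    using assms(3) unfolding \<theta>_def l_def by simp
  finally have "2 * exp (2 * \<theta> + n * W * (2 * \<theta>)\<^sup>2) * exp (- \<theta> * R) / \<theta> \<le> 2 * exp 1" .
  with tail assms \<open>0 < \<theta>\<close> show "integrable \<mu> (\<lambda>x. \<bar>f x\<bar> * indicator {x. R < \<bar>f x\<bar>} x)"
    and "measure_pmf.expectation \<mu> (\<lambda>x. \<bar>f x\<bar> * indicator {x. R < \<bar>f x\<bar>} x) \<le> 2 * exp 1"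
    unfolding \<theta>_def l_def by auto
qed

end

section \<open>Step kernels with exponential moments\<close>

locale exp_moment_kernel =
  fixes p :: "int pmf" and \<delta> :: real
  assumes delta_pos: "0 < \<delta>"
    and summable_exp_moment:
      "\<And>\<theta>. \<bar>\<theta>\<bar> \<le> \<delta> \<Longrightarrow> (\<lambda>x. exp (\<theta> * real_of_int x) * pmf p x) summable_on UNIV"
begin

definition drift :: real where
  "drift = measure_pmf.expectation p real_of_int"

definition variance_proxy :: real where
  "variance_proxy = measure_pmf.expectation p (\<lambda>x. (real_of_int x)\<^sup>2 * exp (\<delta> / 2 * \<bar>real_of_int x\<bar>))"

lemma integrable_exp_moment:
  assumes "\<bar>\<theta>\<bar> \<le> \<delta>"
  shows "integrable p (\<lambda>x. exp (\<theta> * real_of_int x))"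
proof -
  have "(\<lambda>x. norm (exp (\<theta> * real_of_int x) * pmf p x)) summable_on UNIV"
    using summable_exp_moment[OF assms] by (simp add: abs_mult)
  then have abs_summable: "Infinite_Set_Sum.abs_summable_on (\<lambda>x. exp (\<theta> * real_of_int x) * pmf p x) UNIV"
    using abs_summable_equivalent by blast
  have "(\<integral>\<^sup>+x. exp (\<theta> * real_of_int x) \<partial>p)
      = (\<integral>\<^sup>+x. ennreal (exp (\<theta> * real_of_int x) * pmf p x) \<partial>count_space UNIV)"
    by (simp add: nn_integral_measure_pmf ennreal_mult' mult.commute)
  also have "\<dots> = ennreal (infsetsum (\<lambda>x. exp (\<theta> * real_of_int x) * pmf p x) UNIV)"
    by (rule nn_integral_conv_infsetsum[OF abs_summable]) simp
  finally show ?thesis by (intro integrableI_bounded) auto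
qed

lemma integrable_of_le_exp_sum:
  fixes f :: "int \<Rightarrow> real"
  assumes "\<And>x. \<bar>f x\<bar> \<le> C * (exp (\<delta> * real_of_int x) + exp (- \<delta> * real_of_int x))"
  shows "integrable p f"
proof (rule Bochner_Integration.integrable_bound)
  show "integrable p (\<lambda>x. C * (exp (\<delta> * real_of_int x) + exp (- \<delta> * real_of_int x)))"
    using integrable_exp_moment[of \<delta>] integrable_exp_moment[of "- \<delta>"] delta_pos by auto
  show "AE x in p. norm (f x) \<le> norm (C * (exp (\<delta> * real_of_int x) + exp (- \<delta> * real_of_int x)))"
    using assms by (auto intro: order.trans[OF _ abs_ge_self])
qed simp

lemma integrable_step: "integrable p real_of_int"
  by (rule integrable_of_le_exp_sum[of _ "1 / \<delta>"]) (use abs_le_exp_sum[OF delta_pos] in auto)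

lemma integrable_variance_proxy_integrand:
  "integrable p (\<lambda>x. (real_of_int x)\<^sup>2 * exp (\<delta> / 2 * \<bar>real_of_int x\<bar>))"
  by (rule integrable_of_le_exp_sum[of _ "8 / \<delta>\<^sup>2"]) (use sq_mult_exp_le_exp_sum[OF delta_pos] in auto)

lemma variance_proxy_nonneg: "0 \<le> variance_proxy"
  unfolding variance_proxy_def by (intro integral_nonneg_AE) auto

lemma infsum_eq_drift: "(\<Sum>\<^sub>\<infinity>x\<in>UNIV. real_of_int x * pmf p x) = drift"
proof -
  have "drift = integral\<^sup>L (count_space UNIV) (\<lambda>x. pmf p x *\<^sub>R real_of_int x)"
    unfolding drift_def measure_pmf_eq_density by (rule integral_density) auto
  also have "\<dots> = infsetsum (\<lambda>x. real_of_int x * pmf p x) UNIV"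
    unfolding infsetsum_def by (simp add: mult.commute)
  also have "\<dots> = (\<Sum>\<^sub>\<infinity>x\<in>UNIV. real_of_int x * pmf p x)"
  proof (rule infsetsum_infsum)
    have "integrable (count_space UNIV) (\<lambda>x. pmf p x *\<^sub>R real_of_int x)"
      using integrable_step unfolding measure_pmf_eq_density by (subst (asm) integrable_density) auto
    then show "Infinite_Set_Sum.abs_summable_on (\<lambda>x. real_of_int x * pmf p x) UNIV"
      unfolding abs_summable_on_def by (simp add: mult.commute)
  qed
  finally show ?thesis ..
qed

lemma expectation_exp_le:
  assumes "\<bar>\<theta>\<bar> \<le> \<delta> / 2"
  shows "measure_pmf.expectation p (\<lambda>x. exp (\<theta> * real_of_int x)) \<le> 1 + \<theta> * drift + \<theta>\<^sup>2 * variance_proxy"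
proof -
  let ?g = "\<lambda>x. (real_of_int x)\<^sup>2 * exp (\<delta> / 2 * \<bar>real_of_int x\<bar>)"
  have "exp (\<theta> * real_of_int x) \<le> 1 + \<theta> * real_of_int x + \<theta>\<^sup>2 * ?g x" for x
  proof -
    have "\<bar>\<theta>\<bar> * \<bar>real_of_int x\<bar> \<le> \<delta> / 2 * \<bar>real_of_int x\<bar>"
      using assms by (intro mult_right_mono) auto
    then have "\<bar>\<theta> * real_of_int x\<bar> \<le> \<delta> / 2 * \<bar>real_of_int x\<bar>"
      by (simp add: abs_mult)
    then have "(\<theta> * real_of_int x)\<^sup>2 * exp \<bar>\<theta> * real_of_int x\<bar> \<le> \<theta>\<^sup>2 * ?g x"
      by (simp add: power_mult_distrib mult.assoc mult_left_mono)
    then show ?thesis using exp_le_one_plus_sq[of "\<theta> * real_of_int x"] by linarith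
  qed
  then have "measure_pmf.expectation p (\<lambda>x. exp (\<theta> * real_of_int x))
      \<le> measure_pmf.expectation p (\<lambda>x. 1 + \<theta> * real_of_int x + \<theta>\<^sup>2 * ?g x)"
    using assms delta_pos integrable_step integrable_variance_proxy_integrand
    by (intro integral_mono integrable_exp_moment) auto
  also have "\<dots> = 1 + \<theta> * drift + \<theta>\<^sup>2 * variance_proxy"
    unfolding drift_def variance_proxy_def using integrable_step integrable_variance_proxy_integrand by simp
  finally show ?thesis .
qed

lemma nn_integral_exp_crw_centred_le:
  assumes "0 \<le> s" and "\<bar>\<theta>\<bar> \<le> \<delta> / 2"
  shows "(\<integral>\<^sup>+d. exp (\<theta> * (real_of_int d - s * drift)) \<partial>crw_pmf p s) \<le> exp (s * variance_proxy * \<theta>\<^sup>2)"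
proof (cases "s = 0")
  case False
  with assms have "0 < s" by simp
  define \<phi> where "\<phi> = measure_pmf.expectation p (\<lambda>x. exp (\<theta> * real_of_int x))"
  have "integrable p (\<lambda>x. exp (\<theta> * real_of_int x))"
    using assms delta_pos by (intro integrable_exp_moment) auto
  then have mgf: "(\<integral>\<^sup>+x. exp (\<theta> * real_of_int x) \<partial>p) = ennreal \<phi>"
    unfolding \<phi>_def by (rule nn_integral_eq_integral) auto
  have "0 \<le> \<phi>" unfolding \<phi>_def by (intro integral_nonneg_AE) auto
  have "(\<integral>\<^sup>+d. exp (\<theta> * (real_of_int d - s * drift)) \<partial>crw_pmf p s)
      = (\<integral>\<^sup>+d. ennreal (exp (- \<theta> * s * drift)) * exp (\<theta> * real_of_int d) \<partial>crw_pmf p s)"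
    by (simp add: algebra_simps flip: ennreal_mult exp_add)
  also have "\<dots> = ennreal (exp (- \<theta> * s * drift) * exp (s * (\<phi> - 1)))"
    by (simp add: nn_integral_cmult nn_integral_exp_crw_pmf[OF \<open>0 < s\<close> mgf \<open>0 \<le> \<phi>\<close>] ennreal_mult)
  also have "\<dots> \<le> exp (s * variance_proxy * \<theta>\<^sup>2)"
  proof (intro ennreal_leI)
    have "s * (\<phi> - 1 - \<theta> * drift) \<le> s * (\<theta>\<^sup>2 * variance_proxy)"
      using expectation_exp_le[OF assms(2)] \<open>0 < s\<close> unfolding \<phi>_def by (intro mult_left_mono) auto
    then show "exp (- \<theta> * s * drift) * exp (s * (\<phi> - 1)) \<le> exp (s * variance_proxy * \<theta>\<^sup>2)"
      by (simp add: algebra_simps flip: exp_add)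
  qed
  finally show ?thesis .
qed (simp add: crw_pmf_def)

lemma crw_offset_subgaussian:
  assumes "0 \<le> s" and "s * variance_proxy \<le> V" and "\<bar>real_of_int c - s * drift\<bar> \<le> 1"
  shows "offset_subgaussian (crw_pmf p s) (\<lambda>d. real_of_int (c - d)) (\<delta> / 2) V"
  unfolding offset_subgaussian_def
proof (intro allI impI)
  fix \<sigma> :: real assume "\<bar>\<sigma>\<bar> \<le> \<delta> / 2"
  have "(\<integral>\<^sup>+d. exp (\<sigma> * real_of_int (c - d)) \<partial>crw_pmf p s)
      \<le> (\<integral>\<^sup>+d. ennreal (exp \<bar>\<sigma>\<bar>) * exp (- \<sigma> * (real_of_int d - s * drift)) \<partial>crw_pmf p s)"
  proof (intro nn_integral_mono)
    fix d
    have "\<sigma> * (real_of_int c - s * drift) \<le> \<bar>\<sigma>\<bar> * \<bar>real_of_int c - s * drift\<bar>"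
      by (metis abs_ge_self abs_mult)
    also have "\<dots> \<le> \<bar>\<sigma>\<bar>"
      using mult_left_mono[OF assms(3) abs_ge_zero[of \<sigma>]] by simp
    finally have "\<sigma> * (real_of_int c - s * drift) \<le> \<bar>\<sigma>\<bar>" .
    then have "\<sigma> * real_of_int (c - d) \<le> \<bar>\<sigma>\<bar> + - \<sigma> * (real_of_int d - s * drift)"
      by (simp add: algebra_simps)
    then show "ennreal (exp (\<sigma> * real_of_int (c - d)))
        \<le> ennreal (exp \<bar>\<sigma>\<bar>) * exp (- \<sigma> * (real_of_int d - s * drift))"
      by (simp flip: ennreal_mult exp_add)
  qed
  also have "\<dots> = ennreal (exp \<bar>\<sigma>\<bar>) * (\<integral>\<^sup>+d. exp (- \<sigma> * (real_of_int d - s * drift)) \<partial>crw_pmf p s)"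
    by (rule nn_integral_cmult) simp
  also have "\<dots> \<le> ennreal (exp \<bar>\<sigma>\<bar>) * exp (s * variance_proxy * (- \<sigma>)\<^sup>2)"
    using \<open>\<bar>\<sigma>\<bar> \<le> \<delta> / 2\<close> by (intro mult_left_mono nn_integral_exp_crw_centred_le[OF \<open>0 \<le> s\<close>]) auto
  also have "\<dots> \<le> exp (\<bar>\<sigma>\<bar> + V * \<sigma>\<^sup>2)"
    using assms(2) by (simp add: mult_right_mono flip: ennreal_mult exp_add)
  finally show "(\<integral>\<^sup>+d. exp (\<sigma> * real_of_int (c - d)) \<partial>crw_pmf p s) \<le> exp (\<bar>\<sigma>\<bar> + V * \<sigma>\<^sup>2)" .
qed

lemma integrable_crw_displacement:
  assumes "0 \<le> s"
  shows "integrable (crw_pmf p s) real_of_int"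
proof -
  have "(\<integral>\<^sup>+d. exp (\<sigma> * (real_of_int d - s * drift)) \<partial>crw_pmf p s)
      \<le> ennreal (exp (s * variance_proxy * (\<delta> / 2)\<^sup>2))" if "\<bar>\<sigma>\<bar> = \<delta> / 2" for \<sigma>
  proof -
    have "\<sigma>\<^sup>2 = (\<delta> / 2)\<^sup>2" using that by (metis power2_abs)
    then show ?thesis using nn_integral_exp_crw_centred_le[OF assms, of \<sigma>] that by simp
  qed
  moreover have "0 < \<delta> / 2" using delta_pos by simp
  ultimately have "integrable (crw_pmf p s) (\<lambda>d. real_of_int d - s * drift)"
    by (rule abs_moment_le_of_mgf(1))
  from Bochner_Integration.integrable_add[OF this, of "\<lambda>_. s * drift"] show ?thesis
    by simp
qed

end

section \<open>Signed mass and block averages\<close>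

definition signed_mass :: "(int \<Rightarrow> real) \<Rightarrow> int \<Rightarrow> int \<Rightarrow> real" where
  "signed_mass \<rho> k y = (\<Sum>x\<in>{k+1..k+y}. \<rho> x) - (\<Sum>x\<in>{k+y+1..k}. \<rho> x)"

lemma sum_int_interval_shift: "(\<Sum>x\<in>{k+1..k+int u}. g x) = (\<Sum>j=1..u. g (k + int j))"
proof (induction u)
  case (Suc u)
  have "{k+1..k+int (Suc u)} = insert (1 + (k + int u)) {k+1..k+int u}"
    using atLeastAtMostPlus1_int_conv[of "k+1" "k + int u"] by (simp add: add_ac)
  then show ?case using Suc by (simp add: add_ac)
qed simp

lemma signed_mass_minus_linear:
  fixes \<rho> :: "int \<Rightarrow> real" and k y :: int
  shows "signed_mass \<rho> k y - r0 * real_of_int y =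
    (if 0 \<le> y then (\<Sum>j=1..nat y. \<rho> (k + int j) - r0) else - (\<Sum>j=1..nat (- y). \<rho> (k + y + int j) - r0))"
proof (cases "0 \<le> y")
  case True
  then have "signed_mass \<rho> k y = (\<Sum>j=1..nat y. \<rho> (k + int j))"
    using sum_int_interval_shift[where k = k and u = "nat y" and g = \<rho>] by (simp add: signed_mass_def)
  with True show ?thesis by (simp add: sum_subtractf)
next
  case False
  then have "signed_mass \<rho> k y = - (\<Sum>j=1..nat (- y). \<rho> (k + y + int j))"
    using sum_int_interval_shift[where k = "k + y" and u = "nat (- y)" and g = \<rho>]
    by (simp add: signed_mass_def)
  with False show ?thesis by (simp add: sum_subtractf)
qed

lemma abs_sum_le_of_block_sums:
  fixes f :: "int \<Rightarrow> real"
  assumes "0 < L" and "0 \<le> e" and bounded: "\<And>j. \<bar>f j\<bar> \<le> B"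
    and blocks: "\<And>m. 0 \<le> m \<Longrightarrow> m \<le> int u \<Longrightarrow> \<bar>\<Sum>j=1..L. f (m + int j)\<bar> \<le> e * L"
  shows "\<bar>\<Sum>j=1..u. f (int j)\<bar> \<le> e * u + L * B"
  \<comment> \<open>peel off complete blocks of length L; the last, incomplete block costs at most L B\<close>
  using bounded blocks
proof (induction u arbitrary: f rule: less_induct)
  case (less u)
  have "0 \<le> B" using less.prems(1)[of 0] by linarith
  show ?case
  proof (cases "u < L")
    case True
    have "\<bar>\<Sum>j=1..u. f (int j)\<bar> \<le> (\<Sum>j=1..u. \<bar>f (int j)\<bar>)" by (rule sum_abs)
    also have "\<dots> \<le> u * B" using sum_bounded_above[of "{1..u}", OF less.prems(1)] by simp
    also have "\<dots> \<le> L * B" using True \<open>0 \<le> B\<close> by (intro mult_right_mono) auto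
    finally show ?thesis using \<open>0 \<le> e\<close> by (simp add: add_increasing)
  next
    case False
    then obtain w where u: "u = L + w" by (metis le_add_diff_inverse not_less)
    have "{1..u} = {1..L} \<union> {L+1..L+w}" using u \<open>0 < L\<close> by auto
    then have split: "(\<Sum>j=1..u. f (int j)) = (\<Sum>j=1..L. f (int j)) + (\<Sum>j=1..w. f (int L + int j))"
      using sum.shift_bounds_cl_nat_ivl[of "\<lambda>j. f (int j)" 1 L w] by (simp add: sum.union_disjoint add_ac)
    have "\<bar>\<Sum>j=1..L. f (int j)\<bar> \<le> e * L" using less.prems(2)[of 0] by simp
    moreover have "\<bar>\<Sum>j=1..w. f (int L + int j)\<bar> \<le> e * w + L * B"
    proof (rule less.IH)
      show "w < u" using u \<open>0 < L\<close> by simp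
      show "\<bar>\<Sum>j = 1..L. f (int L + (m + int j))\<bar> \<le> e * real L" if "0 \<le> m" "m \<le> int w" for m
        using less.prems(2)[of "int L + m"] that u by (simp add: add_ac)
    qed (rule less.prems(1))
    ultimately show ?thesis
      using split u abs_triangle_ineq[of "\<Sum>j=1..L. f (int j)" "\<Sum>j=1..w. f (int L + int j)"]
      by (simp add: algebra_simps)
  qed
qed

lemma signed_mass_deviation_le:
  assumes "\<And>x. \<bar>\<rho> x - r0\<bar> \<le> B"
  shows "\<bar>signed_mass \<rho> k y - r0 * real_of_int y\<bar> \<le> B * \<bar>real_of_int y\<bar>"
proof -
  have "\<bar>\<Sum>j=1..u. \<rho> (a + int j) - r0\<bar> \<le> B * u" for a u
  proof -
    have "\<bar>\<Sum>j=1..u. \<rho> (a + int j) - r0\<bar> \<le> (\<Sum>j=1..u. \<bar>\<rho> (a + int j) - r0\<bar>)"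
      by (rule sum_abs)
    also have "\<dots> \<le> of_nat (card {1..u}) * B"
      by (rule sum_bounded_above) (rule assms)
    finally show ?thesis by (simp add: mult.commute)
  qed
  from this[of k "nat y"] this[of "k + y" "nat (- y)"] show ?thesis
    by (cases "0 \<le> y") (simp_all add: signed_mass_minus_linear)
qed

lemma signed_mass_deviation_le_blocks:
  assumes "0 < L" and "0 \<le> e" and bounded: "\<And>x. \<bar>\<rho> x - r0\<bar> \<le> B"
    and blocks: "\<And>m. \<bar>real_of_int m\<bar> \<le> R \<Longrightarrow> \<bar>\<Sum>j=1..L. \<rho> (k + m + int j) - r0\<bar> \<le> e * L"
    and "\<bar>real_of_int y\<bar> \<le> R"
  shows "\<bar>signed_mass \<rho> k y - r0 * real_of_int y\<bar> \<le> e * \<bar>real_of_int y\<bar> + L * B"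
proof (cases "0 \<le> y")
  case True
  have "\<bar>\<Sum>j=1..nat y. \<rho> (k + int j) - r0\<bar> \<le> e * nat y + L * B"
  proof (rule abs_sum_le_of_block_sums[OF \<open>0 < L\<close> \<open>0 \<le> e\<close>, where f = "\<lambda>j. \<rho> (k + j) - r0"])
    show "\<bar>\<Sum>j=1..L. \<rho> (k + (m + int j)) - r0\<bar> \<le> e * L" if "0 \<le> m" "m \<le> int (nat y)" for m
      using blocks[of m] that True \<open>\<bar>real_of_int y\<bar> \<le> R\<close> by (simp add: add_ac)
  qed (rule bounded)
  then show ?thesis using True by (simp add: signed_mass_minus_linear)
next
  case False
  have "\<bar>\<Sum>j=1..nat (- y). \<rho> (k + y + int j) - r0\<bar> \<le> e * nat (- y) + L * B"
  proof (rule abs_sum_le_of_block_sums[OF \<open>0 < L\<close> \<open>0 \<le> e\<close>, where f = "\<lambda>j. \<rho> (k + y + j) - r0"])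
    show "\<bar>\<Sum>j=1..L. \<rho> (k + y + (m + int j)) - r0\<bar> \<le> e * L" if "0 \<le> m" "m \<le> int (nat (- y))" for m
      using blocks[of "y + m"] that False \<open>\<bar>real_of_int y\<bar> \<le> R\<close> by (simp add: add_ac)
  qed (rule bounded)
  then show ?thesis using False by (simp add: signed_mass_minus_linear)
qed

lemma signed_mass_deviation_le_tail:
  assumes "0 < L" and "0 \<le> e" and bounded: "\<And>x. \<bar>\<rho> x - r0\<bar> \<le> B"
    and blocks: "\<And>m. \<bar>real_of_int m\<bar> \<le> R \<Longrightarrow> \<bar>\<Sum>j=1..L. \<rho> (k + m + int j) - r0\<bar> \<le> e * L"
  shows "\<bar>signed_mass \<rho> k y - r0 * real_of_int y\<bar>
    \<le> e * \<bar>real_of_int y\<bar> + L * B + B * (\<bar>real_of_int y\<bar> * indicator {y. R < \<bar>real_of_int y\<bar>} y)"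
proof (cases "R < \<bar>real_of_int y\<bar>")
  case True
  have "0 \<le> B" using bounded[of 0] by linarith
  then show ?thesis
    using True signed_mass_deviation_le[OF bounded, where k = k and y = y] \<open>0 \<le> e\<close>
    by (simp add: add_increasing)
next
  case False
  then show ?thesis
    using signed_mass_deviation_le_blocks[OF assms] by simp
qed

lemma abs_expectation_signed_mass_le:
  fixes \<mu> :: "'b pmf" and Y :: "'b \<Rightarrow> int" and \<rho> :: "int \<Rightarrow> real" and L :: nat and e r0 B R :: real
  assumes "0 < L" and "0 \<le> e" and "0 \<le> r0" and bounded: "\<And>x. \<bar>\<rho> x - r0\<bar> \<le> B"
    and blocks: "\<And>m. \<bar>real_of_int m\<bar> \<le> R \<Longrightarrow> \<bar>\<Sum>j=1..L. \<rho> (k + m + int j) - r0\<bar> \<le> e * real L"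
    and int_Y: "integrable \<mu> (\<lambda>\<omega>. real_of_int (Y \<omega>))"
    and int_tail: "integrable \<mu> (\<lambda>\<omega>. \<bar>real_of_int (Y \<omega>)\<bar> * indicator {\<omega>. R < \<bar>real_of_int (Y \<omega>)\<bar>} \<omega>)"
  shows "\<bar>measure_pmf.expectation \<mu> (\<lambda>\<omega>. signed_mass \<rho> k (Y \<omega>))\<bar>
    \<le> r0 * \<bar>measure_pmf.expectation \<mu> (\<lambda>\<omega>. real_of_int (Y \<omega>))\<bar>
      + e * measure_pmf.expectation \<mu> (\<lambda>\<omega>. \<bar>real_of_int (Y \<omega>)\<bar>) + real L * B
      + B * measure_pmf.expectation \<mu> (\<lambda>\<omega>. \<bar>real_of_int (Y \<omega>)\<bar> * indicator {\<omega>. R < \<bar>real_of_int (Y \<omega>)\<bar>} \<omega>)"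
    (is "\<bar>?E (\<lambda>\<omega>. signed_mass \<rho> k (Y \<omega>))\<bar> \<le> _ + _ + _ + B * ?E ?tail")
proof -
  let ?D = "\<lambda>\<omega>. signed_mass \<rho> k (Y \<omega>) - r0 * real_of_int (Y \<omega>)"
  let ?G = "\<lambda>\<omega>. e * \<bar>real_of_int (Y \<omega>)\<bar> + real L * B + B * ?tail \<omega>"
  have pointwise: "\<bar>?D \<omega>\<bar> \<le> ?G \<omega>" for \<omega>
    using signed_mass_deviation_le_tail[OF assms(1,2) bounded blocks, where y = "Y \<omega>"]
    by (simp add: indicator_def)
  have int_G: "integrable \<mu> ?G" using int_Y int_tail by simp
  have int_D: "integrable \<mu> ?D"
  proof (rule Bochner_Integration.integrable_bound[OF int_G])
    show "AE \<omega> in \<mu>. norm (?D \<omega>) \<le> norm (?G \<omega>)"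
      using order.trans[OF pointwise abs_ge_self] by (intro AE_I2) simp
  qed simp
  have "?E (\<lambda>\<omega>. signed_mass \<rho> k (Y \<omega>)) = ?E (\<lambda>\<omega>. r0 * real_of_int (Y \<omega>) + ?D \<omega>)"
    by simp
  also have "\<dots> = r0 * ?E (\<lambda>\<omega>. real_of_int (Y \<omega>)) + ?E ?D"
    using int_D int_Y by (subst Bochner_Integration.integral_add) auto
  finally have "\<bar>?E (\<lambda>\<omega>. signed_mass \<rho> k (Y \<omega>))\<bar> \<le> r0 * \<bar>?E (\<lambda>\<omega>. real_of_int (Y \<omega>))\<bar> + \<bar>?E ?D\<bar>"
    using \<open>0 \<le> r0\<close> abs_triangle_ineq[of "r0 * ?E (\<lambda>\<omega>. real_of_int (Y \<omega>))" "?E ?D"]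
    by (simp add: abs_mult)
  also have "\<bar>?E ?D\<bar> \<le> ?E (\<lambda>\<omega>. \<bar>?D \<omega>\<bar>)"
    by (rule integral_abs_bound)
  also have "\<dots> \<le> ?E ?G"
    using int_D int_G pointwise by (intro integral_mono) auto
  also have "?E ?G = e * ?E (\<lambda>\<omega>. \<bar>real_of_int (Y \<omega>)\<bar>) + real L * B + B * ?E ?tail"
    using int_Y int_tail by simp
  finally show ?thesis by simp
qed

section \<open>Expected particle counts\<close>

lemma emeasure_crw_event:
  assumes walk: "is_crw M p x Xp" and "0 \<le> s"
    and meas: "Xp \<in> measurable M (PiM UNIV (\<lambda>_::real. count_space (UNIV::int set)))"
  shows "emeasure M {\<omega>\<in>space M. Q (Xp \<omega> s)} = emeasure (crw_pmf p s) {d. Q (x + d)}"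
proof -
  have [measurable]: "(\<lambda>\<omega>. Xp \<omega> t) \<in> measurable M (count_space UNIV)" for t
    using measurable_compose[OF meas measurable_component_singleton[of t UNIV]] by simp
  have start: "Xp \<omega> 0 = x" if "\<omega> \<in> space M" for \<omega>
    using walk that unfolding is_crw_def by auto
  have "distr M (count_space UNIV) (\<lambda>\<omega>. Xp \<omega> ([0, s] ! Suc 0) - Xp \<omega> ([0, s] ! 0))
      = measure_pmf (crw_pmf p ([0, s] ! Suc 0 - [0, s] ! 0))"
    using walk \<open>0 \<le> s\<close> unfolding is_crw_def by (auto dest!: spec[of _ "[0, s]"])
  then have "measure_pmf (crw_pmf p s) = distr M (count_space UNIV) (\<lambda>\<omega>. Xp \<omega> s - Xp \<omega> 0)"
    by simp
  then have "emeasure (crw_pmf p s) {d. Q (x + d)}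
      = emeasure M ((\<lambda>\<omega>. Xp \<omega> s - Xp \<omega> 0) -` {d. Q (x + d)} \<inter> space M)"
    by (simp add: emeasure_distr)
  also have "(\<lambda>\<omega>. Xp \<omega> s - Xp \<omega> 0) -` {d. Q (x + d)} \<inter> space M = {\<omega>\<in>space M. Q (Xp \<omega> s)}"
    using start by auto
  finally show ?thesis ..
qed

lemma nn_integral_count_less:
  assumes [measurable]: "e \<in> measurable M (count_space (UNIV :: nat set))"
  shows "(\<integral>\<^sup>+i. emeasure M {\<omega>\<in>space M. i < e \<omega>} \<partial>count_space UNIV) = (\<integral>\<^sup>+\<omega>. of_nat (e \<omega>) \<partial>M)"
proof -
  have "emeasure M {\<omega>\<in>space M. i < e \<omega>} = (\<integral>\<^sup>+\<omega>. indicator {i. i < e \<omega>} i \<partial>M)" for i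
  proof -
    have "emeasure M {\<omega>\<in>space M. i < e \<omega>} = (\<integral>\<^sup>+\<omega>. indicator {\<omega>\<in>space M. i < e \<omega>} \<omega> \<partial>M)"
      by (rule nn_integral_indicator[symmetric]) measurable
    also have "\<dots> = (\<integral>\<^sup>+\<omega>. indicator {i. i < e \<omega>} i \<partial>M)"
      by (rule nn_integral_cong) (simp add: indicator_def)
    finally show ?thesis .
  qed
  then have "(\<integral>\<^sup>+i. emeasure M {\<omega>\<in>space M. i < e \<omega>} \<partial>count_space UNIV)
      = (\<integral>\<^sup>+i. \<integral>\<^sup>+\<omega>. indicator {i. i < e \<omega>} i \<partial>M \<partial>count_space UNIV)"
    by simp
  also have "\<dots> = (\<integral>\<^sup>+\<omega>. \<integral>\<^sup>+i. indicator {i. i < e \<omega>} i \<partial>count_space UNIV \<partial>M)"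
    by (rule nn_integral_count_space_nn_integral[symmetric]) auto
  also have "\<dots> = (\<integral>\<^sup>+\<omega>. of_nat (e \<omega>) \<partial>M)"
    by (simp add: emeasure_count_space_finite ennreal_of_nat_eq_real_of_nat)
  finally show ?thesis .
qed

lemma expectation_interval_sum:
  fixes \<mu> :: "'b pmf" and \<rho> :: "int \<Rightarrow> real" and I :: "'b \<Rightarrow> int set" and Y :: "'b \<Rightarrow> int"
  assumes "\<And>x. 0 \<le> \<rho> x" and "\<And>x. \<rho> x \<le> Rb"
    and "\<And>d. finite (I d)" and "\<And>d. int (card (I d)) \<le> \<bar>Y d\<bar>"
    and int_Y: "integrable \<mu> (\<lambda>d. real_of_int (Y d))"
  shows "integrable \<mu> (\<lambda>d. \<Sum>x\<in>I d. \<rho> x)"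
    and "enn2real (\<integral>\<^sup>+d. \<integral>\<^sup>+x. ennreal (\<rho> x) * indicator (I d) x \<partial>count_space UNIV \<partial>\<mu>)
      = measure_pmf.expectation \<mu> (\<lambda>d. \<Sum>x\<in>I d. \<rho> x)"
proof -
  have "0 \<le> Rb" using assms(1,2)[of 0] by linarith
  have bound: "(\<Sum>x\<in>I d. \<rho> x) \<le> Rb * \<bar>real_of_int (Y d)\<bar>" for d
  proof -
    have "(\<Sum>x\<in>I d. \<rho> x) \<le> of_nat (card (I d)) * Rb"
      by (rule sum_bounded_above) (rule assms(2))
    also have "\<dots> \<le> \<bar>real_of_int (Y d)\<bar> * Rb"
      using assms(4)[of d] \<open>0 \<le> Rb\<close> by (intro mult_right_mono) linarith+
    finally show ?thesis by (simp add: mult.commute)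
  qed
  show "integrable \<mu> (\<lambda>d. \<Sum>x\<in>I d. \<rho> x)"
  proof (rule Bochner_Integration.integrable_bound)
    show "integrable \<mu> (\<lambda>d. Rb * \<bar>real_of_int (Y d)\<bar>)"
      using int_Y by simp
    show "AE d in \<mu>. norm (\<Sum>x\<in>I d. \<rho> x) \<le> norm (Rb * \<bar>real_of_int (Y d)\<bar>)"
      using bound sum_nonneg[of _ \<rho>] assms(1) \<open>0 \<le> Rb\<close> by (intro AE_I2) simp
  qed simp
  have "(\<integral>\<^sup>+x. ennreal (\<rho> x) * indicator (I d) x \<partial>count_space UNIV) = ennreal (\<Sum>x\<in>I d. \<rho> x)" for d
    using assms(1,3) by (simp add: nn_integral_indicator_finite sum_ennreal)
  then show "enn2real (\<integral>\<^sup>+d. \<integral>\<^sup>+x. ennreal (\<rho> x) * indicator (I d) x \<partial>count_space UNIV \<partial>\<mu>)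
      = measure_pmf.expectation \<mu> (\<lambda>d. \<Sum>x\<in>I d. \<rho> x)"
    using assms(1) by (simp add: integral_eq_nn_integral sum_nonneg)
qed

locale particle_system = prob_space M for M :: "'a measure" +
  fixes p :: "int pmf" and eta :: "int \<Rightarrow> 'a \<Rightarrow> nat" and X :: "int \<Rightarrow> nat \<Rightarrow> 'a \<Rightarrow> real \<Rightarrow> int"
  assumes walks: "\<And>x i. is_crw M p x (X x i)"
    and indep: "system_indep M eta X"
begin

lemma measurable_eta [measurable]: "eta x \<in> measurable M (count_space UNIV)"
  using indep unfolding system_indep_def by blast

lemma measurable_path: "X x i \<in> measurable M (PiM UNIV (\<lambda>_::real. count_space (UNIV::int set)))"
  using indep unfolding system_indep_def by blast

lemma measurable_position [measurable]: "(\<lambda>\<omega>. X x i \<omega> t) \<in> measurable M (count_space UNIV)"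
  using measurable_compose[OF measurable_path measurable_component_singleton[of t UNIV]] by simp

lemma start_position: "\<omega> \<in> space M \<Longrightarrow> X x i \<omega> 0 = x"
  using walks unfolding is_crw_def by blast

lemma emeasure_label_event:
  assumes "0 \<le> s"
  shows "emeasure M {\<omega>\<in>space M. i < eta x \<omega> \<and> Q (X x i \<omega> s)}
    = emeasure M {\<omega>\<in>space M. i < eta x \<omega>} * emeasure (crw_pmf p s) {d. Q (x + d)}"
proof -
  define A where "A = {\<omega>\<in>space M. i < eta x \<omega>}"
  define B where "B = {f \<in> space (PiM UNIV (\<lambda>_::real. count_space (UNIV::int set))). Q (f s)}"
  have "B \<in> sets (PiM UNIV (\<lambda>_::real. count_space (UNIV::int set)))"
    unfolding B_def using measurable_component_singleton[of s UNIV "\<lambda>_::real. count_space (UNIV::int set)"]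
    by measurable
  moreover have "A = eta x -` {i<..} \<inter> space M" unfolding A_def by auto
  moreover have "{\<omega>\<in>space M. Q (X x i \<omega> s)} = X x i -` B \<inter> space M"
    unfolding B_def using measurable_space[OF measurable_path] by auto
  ultimately have "prob (A \<inter> {\<omega>\<in>space M. Q (X x i \<omega> s)}) = prob A * prob {\<omega>\<in>space M. Q (X x i \<omega> s)}"
    using indep_setsD[OF conjunct2[OF conjunct2[OF indep[unfolded system_indep_def]]],
        of "{Inl x, Inr (x, i)}" "\<lambda>k. case k of Inl _ \<Rightarrow> A | Inr _ \<Rightarrow> {\<omega>\<in>space M. Q (X x i \<omega> s)}"]
    by auto
  then have "emeasure M (A \<inter> {\<omega>\<in>space M. Q (X x i \<omega> s)})
      = emeasure M A * emeasure M {\<omega>\<in>space M. Q (X x i \<omega> s)}"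
    by (simp add: emeasure_eq_measure ennreal_mult)
  moreover have "{\<omega>\<in>space M. i < eta x \<omega> \<and> Q (X x i \<omega> s)} = A \<inter> {\<omega>\<in>space M. Q (X x i \<omega> s)}"
    unfolding A_def by auto
  ultimately show ?thesis
    using emeasure_crw_event[OF walks \<open>0 \<le> s\<close> measurable_path, where Q = Q] unfolding A_def by simp
qed

lemma nn_integral_particle_count:
  assumes "0 \<le> s"
  shows "(\<integral>\<^sup>+\<omega>. particle_count eta X Q s \<omega> \<partial>M)
    = (\<integral>\<^sup>+d. \<integral>\<^sup>+x. (\<integral>\<^sup>+\<omega>. of_nat (eta x \<omega>) \<partial>M) * indicator {x. Q x (x + d)} x \<partial>count_space UNIV \<partial>crw_pmf p s)"
proof -
  let ?E = "\<lambda>x i. {\<omega>\<in>space M. i < eta x \<omega> \<and> Q x (X x i \<omega> s)}"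
  let ?D = "\<lambda>x. emeasure (crw_pmf p s) {d. Q x (x + d)}"
  have "(\<integral>\<^sup>+\<omega>. particle_count eta X Q s \<omega> \<partial>M)
      = (\<integral>\<^sup>+\<omega>. \<integral>\<^sup>+z. indicator (?E (fst z) (snd z)) \<omega> \<partial>count_space UNIV \<partial>M)"
    unfolding particle_count_def
    by (intro nn_integral_cong)
      (auto simp: start_position indicator_def case_prod_beta simp flip: nn_integral_indicator)
  also have "\<dots> = (\<integral>\<^sup>+z. emeasure M (?E (fst z) (snd z)) \<partial>count_space UNIV)"
    by (subst nn_integral_count_space_nn_integral) (simp_all add: nn_integral_indicator)
  also have "\<dots> = (\<integral>\<^sup>+x. \<integral>\<^sup>+i. emeasure M {\<omega>\<in>space M. i < eta x \<omega>} * ?D x \<partial>count_space UNIV \<partial>count_space UNIV)"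
    using emeasure_label_event[OF assms] by (simp add: nn_integral_fst_count_space[symmetric])
  also have "\<dots> = (\<integral>\<^sup>+x. (\<integral>\<^sup>+\<omega>. of_nat (eta x \<omega>) \<partial>M) * ?D x \<partial>count_space UNIV)"
    by (simp add: nn_integral_multc nn_integral_count_less)
  also have "\<dots> = (\<integral>\<^sup>+x. \<integral>\<^sup>+d. (\<integral>\<^sup>+\<omega>. of_nat (eta x \<omega>) \<partial>M) * indicator {x. Q x (x + d)} x
      \<partial>crw_pmf p s \<partial>count_space UNIV)"
    by (simp add: nn_integral_cmult indicator_def flip: nn_integral_indicator)
  also have "\<dots> = (\<integral>\<^sup>+d. \<integral>\<^sup>+x. (\<integral>\<^sup>+\<omega>. of_nat (eta x \<omega>) \<partial>M) * indicator {x. Q x (x + d)} x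
      \<partial>count_space UNIV \<partial>crw_pmf p s)"
    by (rule nn_integral_count_space_nn_integral[symmetric]) auto
  finally show ?thesis .
qed

lemma expected_crossing_difference:
  assumes "0 \<le> s"
    and rho: "\<And>x. (\<integral>\<^sup>+\<omega>. of_nat (eta x \<omega>) \<partial>M) = ennreal (\<rho> x)" "\<And>x. 0 \<le> \<rho> x" "\<And>x. \<rho> x \<le> Rb"
    and "integrable (crw_pmf p s) real_of_int"
  shows "enn2real (\<integral>\<^sup>+\<omega>. particle_count eta X (\<lambda>a b. a \<ge> k + 1 \<and> b \<le> k + c) s \<omega> \<partial>M)
       - enn2real (\<integral>\<^sup>+\<omega>. particle_count eta X (\<lambda>a b. a \<le> k \<and> b > k + c) s \<omega> \<partial>M)
       = measure_pmf.expectation (crw_pmf p s) (\<lambda>d. signed_mass \<rho> k (c - d))"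
proof -
  have int_Y: "integrable (crw_pmf p s) (\<lambda>d. real_of_int (c - d))"
    using \<open>integrable (crw_pmf p s) real_of_int\<close> by simp
  let ?right = "\<lambda>d. {k+1..k+(c-d)}" and ?left = "\<lambda>d. {k+(c-d)+1..k}"
  have card_le: "int (card (?right d)) \<le> \<bar>c - d\<bar>" "int (card (?left d)) \<le> \<bar>c - d\<bar>" for d
    by auto
  note right_sums = expectation_interval_sum[OF rho(2,3) finite_atLeastAtMost_int card_le(1) int_Y]
  note left_sums = expectation_interval_sum[OF rho(2,3) finite_atLeastAtMost_int card_le(2) int_Y]
  have sets: "{x. x \<ge> k + 1 \<and> x + d \<le> k + c} = ?right d" "{x. x \<le> k \<and> x + d > k + c} = ?left d" for d
    by auto
  have "enn2real (\<integral>\<^sup>+\<omega>. particle_count eta X (\<lambda>a b. a \<ge> k + 1 \<and> b \<le> k + c) s \<omega> \<partial>M)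
       - enn2real (\<integral>\<^sup>+\<omega>. particle_count eta X (\<lambda>a b. a \<le> k \<and> b > k + c) s \<omega> \<partial>M)
     = measure_pmf.expectation (crw_pmf p s) (\<lambda>d. \<Sum>x\<in>?right d. \<rho> x)
       - measure_pmf.expectation (crw_pmf p s) (\<lambda>d. \<Sum>x\<in>?left d. \<rho> x)"
    unfolding nn_integral_particle_count[OF \<open>0 \<le> s\<close>] rho(1) sets right_sums(2) left_sums(2) ..
  also have "\<dots> = measure_pmf.expectation (crw_pmf p s) (\<lambda>d. signed_mass \<rho> k (c - d))"
    unfolding signed_mass_def using right_sums(1) left_sums(1) by simp
  finally show ?thesis .
qed

end

section \<open>Asymptotics\<close>

lemma eventually_le_of_vanishing_bound:
  fixes g :: "nat \<Rightarrow> 'b \<Rightarrow> real" and a :: "nat \<Rightarrow> real"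
  assumes "a \<longlonglongrightarrow> 0" and "0 \<le> C"
    and bound: "\<And>\<eta>. 0 < \<eta> \<Longrightarrow> eventually (\<lambda>n. \<forall>t\<in>S. g n t \<le> a n + \<eta> * C) sequentially"
  shows "\<forall>\<epsilon>>0. eventually (\<lambda>n. \<forall>t\<in>S. g n t \<le> \<epsilon>) sequentially"
proof (intro allI impI)
  fix \<epsilon> :: real assume "0 < \<epsilon>"
  then have small: "\<epsilon> / (2 * (C + 1)) * C \<le> \<epsilon> / 2"
    using \<open>0 \<le> C\<close> by (simp add: field_simps)
  have "eventually (\<lambda>n. a n < \<epsilon> / 2) sequentially"
    using order_tendstoD(2)[OF assms(1), of "\<epsilon> / 2"] \<open>0 < \<epsilon>\<close> by simp
  moreover have "eventually (\<lambda>n. \<forall>t\<in>S. g n t \<le> a n + \<epsilon> / (2 * (C + 1)) * C) sequentially"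
    by (rule bound) (use \<open>0 < \<epsilon>\<close> \<open>0 \<le> C\<close> in simp)
  ultimately show "eventually (\<lambda>n. \<forall>t\<in>S. g n t \<le> \<epsilon>) sequentially"
  proof eventually_elim
    case (elim n)
    show ?case
    proof
      fix t assume "t \<in> S"
      then have "g n t \<le> a n + \<epsilon> / (2 * (C + 1)) * C" using elim(2) by blast
      with elim(1) small show "g n t \<le> \<epsilon>" by linarith
    qed
  qed
qed

lemma abs_block_sum_le_of_average:
  fixes f :: "nat \<Rightarrow> real" and L :: nat
  assumes "0 < L" and "0 < N" and "N powr (1/4) * \<bar>(\<Sum>j=1..L. f j) / L - r0\<bar> \<le> \<eta>"
  shows "\<bar>\<Sum>j=1..L. f j - r0\<bar> \<le> \<eta> * N powr (-1/4) * L"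
proof -
  have "(\<Sum>j=1..L. f j - r0) = L * ((\<Sum>j=1..L. f j) / L - r0)"
    using assms(1) by (simp add: sum_subtractf field_simps)
  moreover have "\<bar>(\<Sum>j=1..L. f j) / L - r0\<bar> \<le> \<eta> * N powr (-1/4)"
    using assms(2,3) by (simp add: powr_minus field_simps)
  ultimately show ?thesis
    using assms(1) by (simp add: abs_mult mult_left_mono mult.commute)
qed

lemma powr_quarter_scaled_le:
  fixes x y a \<eta> C :: real
  assumes "y \<le> a + \<eta> * x powr (-1/4) * (C * sqrt x)" and "0 < x"
  shows "x powr (-1/4) * y \<le> x powr (-1/4) * a + \<eta> * C"
proof -
  have "x powr (-1/4) * x powr (-1/4) * sqrt x = x powr (-1/4) * x powr (-1/4) * x powr (1/2)"
    using assms by (simp add: powr_half_sqrt)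
  also have "\<dots> = x powr (-1/4 + -1/4 + 1/2)"
    by (simp only: powr_add)
  finally have cancel: "x powr (-1/4) * x powr (-1/4) * sqrt x = 1"
    using assms by simp
  have "x powr (-1/4) * y \<le> x powr (-1/4) * (a + \<eta> * x powr (-1/4) * (C * sqrt x))"
    using assms by (intro mult_left_mono) auto
  also have "\<dots> = x powr (-1/4) * a + \<eta> * C * (x powr (-1/4) * x powr (-1/4) * sqrt x)"
    by (simp add: algebra_simps)
  finally show ?thesis
    unfolding cancel by simp
qed

context exp_moment_kernel
begin

lemma expected_signed_mass_le:
  fixes \<rho> :: "int \<Rightarrow> real" and L n :: nat and e W r0 B :: real
  assumes large: "3 \<le> n" "1 / sqrt n \<le> \<delta> / 2" "2 * sqrt (ln n / n) \<le> \<delta> / 2" "sqrt (ln n / n) \<le> 1 / 2"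
    and "0 \<le> W" and "0 \<le> r0" and bounded: "\<And>x. \<bar>\<rho> x - r0\<bar> \<le> B" and "0 < L" and "0 \<le> e"
    and blocks: "\<And>m. \<bar>real_of_int m\<bar> \<le> (4 * W + 1) * sqrt (n * ln n) \<Longrightarrow>
      \<bar>\<Sum>j=1..L. \<rho> (k + m + int j) - r0\<bar> \<le> e * L"
    and "0 \<le> s" and "s * variance_proxy \<le> n * W" and "\<bar>real_of_int c - s * drift\<bar> \<le> 1"
  shows "\<bar>measure_pmf.expectation (crw_pmf p s) (\<lambda>d. signed_mass \<rho> k (c - d))\<bar>
    \<le> r0 * ((1 + W) * exp (1 + W)) + e * (2 * exp (1 + W) * sqrt n) + L * B + B * (2 * exp 1)"
proof -
  let ?E = "measure_pmf.expectation (crw_pmf p s)"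
  let ?tail = "\<lambda>d. \<bar>real_of_int (c - d)\<bar>
    * indicator {d. (4 * W + 1) * sqrt (n * ln n) < \<bar>real_of_int (c - d)\<bar>} d"
  have "1 \<le> n" using large by simp
  have "sqrt (real n) \<le> sqrt ((real n)\<^sup>2)"
    using \<open>1 \<le> n\<close> by (intro real_sqrt_le_mono) (simp add: power2_eq_square)
  then have "1 / real n \<le> 1 / sqrt n"
    using \<open>1 \<le> n\<close> by (intro divide_left_mono) auto
  with large have "1 / real n \<le> \<delta> / 2" by linarith
  have "0 \<le> B" using bounded[of 0] by linarith
  have subgaussian: "offset_subgaussian (crw_pmf p s) (\<lambda>d. real_of_int (c - d)) (\<delta> / 2) (n * W)"
    using assms by (intro crw_offset_subgaussian)
  note mean = abs_mean_le_of_offset_subgaussian[OF subgaussian \<open>0 \<le> W\<close> \<open>1 \<le> n\<close> \<open>1 / real n \<le> \<delta> / 2\<close>]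
  note abs_moment = abs_moment_le_of_offset_subgaussian[OF subgaussian \<open>0 \<le> W\<close> \<open>1 \<le> n\<close> large(2)]
  note tail = tail_moment_le_of_offset_subgaussian[OF subgaussian \<open>0 \<le> W\<close> large(1,3,4)]
  have "\<bar>?E (\<lambda>d. signed_mass \<rho> k (c - d))\<bar>
      \<le> r0 * \<bar>?E (\<lambda>d. real_of_int (c - d))\<bar> + e * ?E (\<lambda>d. \<bar>real_of_int (c - d)\<bar>) + L * B + B * ?E ?tail"
    using abs_moment(1) tail(1)
    by (intro abs_expectation_signed_mass_le[OF \<open>0 < L\<close> \<open>0 \<le> e\<close> \<open>0 \<le> r0\<close> bounded blocks]) auto
  moreover have "r0 * \<bar>?E (\<lambda>d. real_of_int (c - d))\<bar> \<le> r0 * ((1 + W) * exp (1 + W))"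
    using mean \<open>0 \<le> r0\<close> by (intro mult_left_mono) auto
  moreover have "e * ?E (\<lambda>d. \<bar>real_of_int (c - d)\<bar>) \<le> e * (2 * exp (1 + W) * sqrt n)"
    using abs_moment(2) \<open>0 \<le> e\<close> by (intro mult_left_mono) auto
  moreover have "B * ?E ?tail \<le> B * (2 * exp 1)"
    using tail(2) \<open>0 \<le> B\<close> by (intro mult_left_mono) auto
  ultimately show ?thesis by linarith
qed

definition expected_net_crossing :: "(int \<Rightarrow> real) \<Rightarrow> int \<Rightarrow> nat \<Rightarrow> real \<Rightarrow> real" where
  "expected_net_crossing \<rho> k n t =
    measure_pmf.expectation (crw_pmf p (n * t)) (\<lambda>d. signed_mass \<rho> k (\<lfloor>n * drift * t\<rfloor> - d))"

lemma eventually_abs_expected_net_crossing_le: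
  fixes \<rho> :: "nat \<Rightarrow> int \<Rightarrow> real" and k :: "nat \<Rightarrow> int" and L :: "nat \<Rightarrow> nat" and e :: "nat \<Rightarrow> real"
    and T W r0 B :: real
  assumes "T * variance_proxy \<le> W" and "0 \<le> W" and "0 \<le> r0" and bounded: "\<And>n x. \<bar>\<rho> n x - r0\<bar> \<le> B"
    and L_pos: "\<And>n. 0 < L n" and e_nonneg: "\<And>n. 0 \<le> e n"
    and blocks: "eventually (\<lambda>n. \<forall>m. \<bar>real_of_int m\<bar> \<le> (4 * W + 1) * sqrt (n * ln n) \<longrightarrow>
      \<bar>\<Sum>j=1..L n. \<rho> n (k n + m + int j) - r0\<bar> \<le> e n * L n) sequentially"
  shows "eventually (\<lambda>n. \<forall>t\<in>{0..T}. \<bar>expected_net_crossing (\<rho> n) (k n) n t\<bar>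
    \<le> r0 * ((1 + W) * exp (1 + W)) + e n * (2 * exp (1 + W) * sqrt n) + L n * B + B * (2 * exp 1))
    sequentially"
proof -
  have "(\<lambda>n. 1 / sqrt (real n)) \<longlonglongrightarrow> 0"
    using tendsto_real_sqrt[OF lim_1_over_n] by (simp add: real_sqrt_divide)
  then have "eventually (\<lambda>n. 1 / sqrt n < \<delta> / 2) sequentially"
    by (rule order_tendstoD(2)) (use delta_pos in simp)
  moreover have "(\<lambda>n. sqrt (ln (real n) / real n)) \<longlonglongrightarrow> 0"
    using tendsto_real_sqrt[OF lim_ln_over_n] by simp
  then have "eventually (\<lambda>n. sqrt (ln n / n) < min (\<delta> / 4) (1 / 2)) sequentially"
    by (rule order_tendstoD(2)) (use delta_pos in simp)
  ultimately have "eventually (\<lambda>n. 3 \<le> n \<and> 1 / sqrt n \<le> \<delta> / 2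
      \<and> 2 * sqrt (ln n / n) \<le> \<delta> / 2 \<and> sqrt (ln n / n) \<le> 1 / 2) sequentially"
    using eventually_ge_at_top[of 3] by eventually_elim auto
  then show ?thesis
    using blocks
  proof eventually_elim
    case (elim n)
    show ?case
    proof
      fix t assume "t \<in> {0..T}"
      then have "t * variance_proxy \<le> T * variance_proxy"
        using variance_proxy_nonneg by (intro mult_right_mono) auto
      then have "n * (t * variance_proxy) \<le> n * W"
        using \<open>T * variance_proxy \<le> W\<close> by (intro mult_left_mono) auto
      moreover have "\<bar>real_of_int \<lfloor>n * drift * t\<rfloor> - n * t * drift\<bar> \<le> 1"
        by (simp add: mult_ac abs_le_iff) linarith
      ultimately show "\<bar>expected_net_crossing (\<rho> n) (k n) n t\<bar>
        \<le> r0 * ((1 + W) * exp (1 + W)) + e n * (2 * exp (1 + W) * sqrt n) + L n * B + B * (2 * exp 1)"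
        unfolding expected_net_crossing_def using elim \<open>t \<in> {0..T}\<close> assms
        by (intro expected_signed_mass_le) (auto simp: mult.assoc)
    qed
  qed
qed

lemma eventually_scaled_expected_net_crossing_le:
  fixes \<rho> :: "nat \<Rightarrow> int \<Rightarrow> real" and k :: "nat \<Rightarrow> int" and L :: "nat \<Rightarrow> nat" and T r0 B :: real
  assumes "0 \<le> T" and "0 \<le> r0" and bounded: "\<And>n x. \<bar>\<rho> n x - r0\<bar> \<le> B" and L_pos: "\<And>n. 0 < L n"
    and L_lim: "(\<lambda>n. real n powr (-1/4) * real (L n)) \<longlonglongrightarrow> 0"
    and averages: "\<And>A \<eta>. 0 < \<eta> \<Longrightarrow> eventually (\<lambda>n. \<forall>m::int.
        \<bar>real_of_int m\<bar> \<le> A * sqrt (real n * ln (real n)) \<longrightarrow>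
        real n powr (1/4) * \<bar>(\<Sum>j=1..L n. \<rho> n (k n + m + int j)) / real (L n) - r0\<bar> \<le> \<eta>) sequentially"
  shows "\<forall>\<epsilon>>0. eventually (\<lambda>n. \<forall>t\<in>{0..T}.
    real n powr (-1/4) * \<bar>expected_net_crossing (\<rho> n) (k n) n t\<bar> \<le> \<epsilon>) sequentially"
proof -
  define W where "W = T * variance_proxy"
  define C0 where "C0 = r0 * ((1 + W) * exp (1 + W)) + B * (2 * exp 1)"
  have "0 \<le> W" unfolding W_def using \<open>0 \<le> T\<close> variance_proxy_nonneg by simp
  have "(\<lambda>n. real n powr (-1/4)) \<longlonglongrightarrow> 0"
    by (rule tendsto_neg_powr[OF _ filterlim_real_sequentially]) simp
  from tendsto_add[OF tendsto_mult_right[OF this, of C0] tendsto_mult_left[OF L_lim, of B]]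
  have vanishing: "(\<lambda>n. real n powr (-1/4) * (C0 + L n * B)) \<longlonglongrightarrow> 0"
    by (simp add: algebra_simps)
  have "eventually (\<lambda>n. \<forall>t\<in>{0..T}. real n powr (-1/4) * \<bar>expected_net_crossing (\<rho> n) (k n) n t\<bar>
      \<le> real n powr (-1/4) * (C0 + L n * B) + \<eta> * (2 * exp (1 + W))) sequentially"
    if "0 < \<eta>" for \<eta>
  proof -
    have blocks: "eventually (\<lambda>n. \<forall>m. \<bar>real_of_int m\<bar> \<le> (4 * W + 1) * sqrt (n * ln n) \<longrightarrow>
      \<bar>\<Sum>j=1..L n. \<rho> n (k n + m + int j) - r0\<bar> \<le> \<eta> * real n powr (-1/4) * L n) sequentially"
      using averages[OF that, of "4 * W + 1"] eventually_gt_at_top[of 0]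
      by eventually_elim (use L_pos abs_block_sum_le_of_average in simp)
    have "T * variance_proxy \<le> W" and e_nonneg: "0 \<le> \<eta> * real n powr (-1/4)" for n
      using that unfolding W_def by simp_all
    from eventually_abs_expected_net_crossing_le[where \<rho> = \<rho> and k = k and L = L,
        OF this(1) \<open>0 \<le> W\<close> \<open>0 \<le> r0\<close> bounded L_pos e_nonneg blocks]
    show ?thesis
      using eventually_gt_at_top[of 0]
    proof eventually_elim
      case (elim n)
      show ?case
      proof
        fix t assume "t \<in> {0..T}"
        with elim(1) have "\<bar>expected_net_crossing (\<rho> n) (k n) n t\<bar>
          \<le> (C0 + L n * B) + \<eta> * real n powr (-1/4) * (2 * exp (1 + W) * sqrt n)"
          unfolding C0_def by fastforce
        then show "real n powr (-1/4) * \<bar>expected_net_crossing (\<rho> n) (k n) n t\<bar>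
          \<le> real n powr (-1/4) * (C0 + L n * B) + \<eta> * (2 * exp (1 + W))"
          by (rule powr_quarter_scaled_le) (use elim(2) in simp)
      qed
    qed
  qed
  from eventually_le_of_vanishing_bound[OF vanishing _ this] show ?thesis
    by simp
qed

end

lemma mean_le_of_sixth_moment:
  fixes e :: "'a \<Rightarrow> nat"
  assumes "prob_space M" and [measurable]: "e \<in> measurable M (count_space UNIV)"
    and sixth: "(\<integral>\<^sup>+\<omega>. ennreal (real (e \<omega>) ^ 6) \<partial>M) \<le> ennreal C"
  shows "(\<integral>\<^sup>+\<omega>. of_nat (e \<omega>) \<partial>M) = ennreal (\<integral>\<omega>. real (e \<omega>) \<partial>M)"
    and "(\<integral>\<omega>. real (e \<omega>) \<partial>M) \<le> 1 + max 0 C"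
proof -
  interpret prob_space M by fact
  have "real k \<le> 1 + real k ^ 6" for k :: nat
    by (cases "k = 0") (auto intro: order.trans[OF self_le_power[of "real k" 6]])
  then have "ennreal (real k) \<le> ennreal (1 + real k ^ 6)" for k :: nat
    by (rule ennreal_leI)
  also have "ennreal (1 + real k ^ 6) = 1 + ennreal (real k ^ 6)" for k :: nat
    by (subst ennreal_plus) auto
  finally have "ennreal (real k) \<le> 1 + ennreal (real k ^ 6)" for k :: nat .
  then have "(\<integral>\<^sup>+\<omega>. real (e \<omega>) \<partial>M) \<le> (\<integral>\<^sup>+\<omega>. 1 + ennreal (real (e \<omega>) ^ 6) \<partial>M)"
    by (intro nn_integral_mono) simp
  also have "\<dots> = 1 + (\<integral>\<^sup>+\<omega>. ennreal (real (e \<omega>) ^ 6) \<partial>M)"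
    by (subst nn_integral_add) (auto simp: emeasure_space_1)
  also have "\<dots> \<le> ennreal (1 + max 0 C)"
    using sixth by (simp add: ennreal_plus[symmetric] add_left_mono order.trans[OF _ ennreal_leI])
  finally have bound: "(\<integral>\<^sup>+\<omega>. real (e \<omega>) \<partial>M) \<le> ennreal (1 + max 0 C)" .
  then have "integrable M (\<lambda>\<omega>. real (e \<omega>))"
    by (intro integrableI_bounded) (auto simp: order.strict_trans1)
  then have eq: "(\<integral>\<^sup>+\<omega>. real (e \<omega>) \<partial>M) = ennreal (\<integral>\<omega>. real (e \<omega>) \<partial>M)"
    by (rule nn_integral_eq_integral) simp
  then show "(\<integral>\<^sup>+\<omega>. of_nat (e \<omega>) \<partial>M) = ennreal (\<integral>\<omega>. real (e \<omega>) \<partial>M)"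
    by (simp add: ennreal_of_nat_eq_real_of_nat)
  from bound[unfolded eq] show "(\<integral>\<omega>. real (e \<omega>) \<partial>M) \<le> 1 + max 0 C"
    by (subst (asm) ennreal_le_iff) auto
qed

theorem lemma4p6:
  fixes p :: "int pmf" and \<delta> :: real and ybar :: real and T :: real
    and M :: "nat \<Rightarrow> 'a measure"
    and eta :: "nat \<Rightarrow> int \<Rightarrow> 'a \<Rightarrow> nat"
    and X :: "nat \<Rightarrow> int \<Rightarrow> nat \<Rightarrow> 'a \<Rightarrow> real \<Rightarrow> int"
    and rho0 v0 :: "real \<Rightarrow> real" and L :: "nat \<Rightarrow> nat"
  defines "b \<equiv> (\<Sum>\<^sub>\<infinity>x\<in>UNIV. real_of_int x * pmf p x)"
  defines "rho \<equiv> (\<lambda>n x. \<integral>\<omega>. real (eta n x \<omega>) \<partial>M n)"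
  defines "v \<equiv> (\<lambda>n x. \<integral>\<omega>. (real (eta n x \<omega>) - rho n x)\<^sup>2 \<partial>M n)"
  assumes A_delta: "\<delta> > 0"
    and A_mgf: "\<And>\<theta>. \<bar>\<theta>\<bar> \<le> \<delta> \<Longrightarrow> (\<lambda>x. exp (\<theta> * real_of_int x) * pmf p x) summable_on UNIV"
    and prob: "\<And>n. prob_space (M n)"
    and walks: "\<And>n x i. is_crw (M n) p x (X n x i)"
    and indep: "\<And>n. system_indep (M n) (eta n) (X n)"
    and moments: "\<exists>C::real. \<forall>n x. (\<integral>\<^sup>+\<omega>. ennreal (real (eta n x \<omega>) ^ 6) \<partial>M n) \<le> ennreal C"
    and rho0_bdd: "bounded (range rho0)" and rho0_nonneg: "\<And>y. rho0 y \<ge> 0"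
    and v0_bdd: "bounded (range v0)" and v0_nonneg: "\<And>y. v0 y \<ge> 0"
    and L_pos: "\<And>n. L n > 0"
    and L_lim: "(\<lambda>n. real n powr (-1/4) * real (L n)) \<longlonglongrightarrow> 0"
    and rho_avg: "\<And>A::real. \<And>\<epsilon>. \<epsilon> > 0 \<Longrightarrow> eventually (\<lambda>n. \<forall>m::int.
        \<bar>real_of_int m\<bar> \<le> A * sqrt (real n * ln (real n)) \<longrightarrow>
        real n powr (1/4) * \<bar>(\<Sum>j=1..L n. rho n (\<lfloor>real n * ybar\<rfloor> + m + int j)) / real (L n)
            - rho0 ybar\<bar> \<le> \<epsilon>) sequentially"
    and v_avg: "\<And>A::real. \<And>\<epsilon>. \<epsilon> > 0 \<Longrightarrow> eventually (\<lambda>n. \<forall>m::int.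
        \<bar>real_of_int m\<bar> \<le> A * sqrt (real n * ln (real n)) \<longrightarrow>
        real n powr (1/4) * \<bar>(\<Sum>j=1..L n. v n (\<lfloor>real n * ybar\<rfloor> + m + int j)) / real (L n)
            - v0 ybar\<bar> \<le> \<epsilon>) sequentially"
    and T_pos: "0 < T"
  shows "\<forall>\<epsilon>>0. eventually (\<lambda>n. \<forall>t\<in>{0..T}.
      real n powr (-1/4) *
        \<bar>enn2real (\<integral>\<^sup>+\<omega>. Y1 (eta n) (X n) b ybar n t \<omega> \<partial>M n)
         - enn2real (\<integral>\<^sup>+\<omega>. Y2 (eta n) (X n) b ybar n t \<omega> \<partial>M n)\<bar> \<le> \<epsilon>) sequentially"
proof -
  interpret exp_moment_kernel p \<delta>
    using A_delta A_mgf by unfold_locales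
  have system: "particle_system (M n) p (eta n) (X n)" for n
    using prob walks indep by (simp add: particle_system_def particle_system_axioms_def)
  obtain C where "\<And>n x. (\<integral>\<^sup>+\<omega>. ennreal (real (eta n x \<omega>) ^ 6) \<partial>M n) \<le> ennreal C"
    using moments by blast
  note rho_mean = mean_le_of_sixth_moment[OF prob particle_system.measurable_eta[OF system] this]
  have rho_nonneg: "0 \<le> rho n x" for n x
    unfolding rho_def by simp
  have rho_bounded: "\<bar>rho n x - rho0 ybar\<bar> \<le> 1 + max 0 C + rho0 ybar" for n x
    using rho_mean(2)[of n x] rho_nonneg[of n x] rho0_nonneg[of ybar] unfolding rho_def by linarith
  have difference: "enn2real (\<integral>\<^sup>+\<omega>. Y1 (eta n) (X n) b ybar n t \<omega> \<partial>M n)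
      - enn2real (\<integral>\<^sup>+\<omega>. Y2 (eta n) (X n) b ybar n t \<omega> \<partial>M n)
    = expected_net_crossing (rho n) \<lfloor>real n * ybar\<rfloor> n t" if "t \<in> {0..T}" for n t
    using that rho_mean rho_nonneg integrable_crw_displacement[of "real n * t"]
    unfolding Y1_def Y2_def b_def infsum_eq_drift rho_def expected_net_crossing_def
    by (intro particle_system.expected_crossing_difference[OF system]) auto
  have "\<forall>\<epsilon>>0. eventually (\<lambda>n. \<forall>t\<in>{0..T}.
      real n powr (-1/4) * \<bar>expected_net_crossing (rho n) \<lfloor>real n * ybar\<rfloor> n t\<bar> \<le> \<epsilon>) sequentially"
    using eventually_scaled_expected_net_crossing_le[OF less_imp_le[OF T_pos] rho0_nonneg rho_bounded
        L_pos L_lim rho_avg]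
    by blast
  then show ?thesis
    by (simp add: difference)
qed

end
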